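(* In the setting below, for every $i\in\{1,\dots,2n+1\}$ we have $g_0g_ig_0^{-1}=g_1^{m_{i1}}g_2^{m_{i2}}\cdots g_{2n+1}^{m_{i,2n+1}}$. In particular $H_M$ is a normal subgroup of $G_M$.
   Context: Let $n\ge 1$ and let $M=(m_{ij})\in SL(2n+1,\mathbb Z)$. Assume that $M$ has exactly one real eigenvalue $\alpha$, that $\alpha>0$, $\alpha\neq 1$, that $\alpha$ is a simple eigenvalue, and that the remaining eigenvalues are $\beta_1,\dots,\beta_k,\bar\beta_1,\dots,\bar\beta_k$ with $\mathrm{Im}\,\beta_j>0$. Let $W\subset\mathbb C^{2n+1}$ be the direct sum of the generalized eigenspaces of $M$ for $\beta_1,\dots,\beta_k$ (so $\dim_{\mathbb C}W=n$). Fix a real eigenvector $a=(a^{(1)},\dots,a^{(2n+1)})^\top\in\mathbb R^{2n+1}$ of $M$ for $\alpha$ and a basis $b_1,\dots,b_n$ of $W$, $b_j=(b_j^{(1)},\dots,b_j^{(2n+1)})^\top$, and let $R=(r_{\ell j})\in M_n(\mathbb C)$ be given by $Mb_j=\sum_{\ell=1}^n r_{\ell j}b_\ell$. For $i=1,\dots,2n+1$ put $u_i=(a^{(i)},b_1^{(i)},\dots,b_n^{(i)})^\top\in\mathbb R\times\mathbb C^n$. Let $\mathbb H=\{w\in\mathbb C:\mathrm{Im}\,w>0\}$, and define holomorphic automorphisms of $\mathbb H\times\mathbb C^n$ by $g_0(w,z)=(\alpha w,R^\top z)$ and $g_i(w,z)=(w,z)+u_i$ for $1\le i\le 2n+1$.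 Let $G_M$ be the group generated by $g_0,\dots,g_{2n+1}$ and $H_M$ the subgroup generated by $g_1,\dots,g_{2n+1}$. *)

theory Defs
  imports "Jordan_Normal_Form.Char_Poly" "Jordan_Normal_Form.Determinant"
    "HOL-Algebra.Bij" "HOL-Algebra.Coset" "HOL-Algebra.Generated_Groups"
begin

definition gen_eigenspace :: "complex mat \<Rightarrow> complex \<Rightarrow> complex vec set" where
  "gen_eigenspace A lam = {v \<in> carrier_vec (dim_row A).
     \<exists>m. ((A - lam \<cdot>\<^sub>m 1\<^sub>m (dim_row A)) ^\<^sub>m m) *\<^sub>v v = 0\<^sub>v (dim_row A)}"

definition upper_gen_eigensum :: "complex mat \<Rightarrow> complex vec set" where
  "upper_gen_eigensum A =
     {v. \<exists>f. (\<forall>\<beta>. eigenvalue A \<beta> \<and> Im \<beta> > 0 \<longrightarrow> f \<beta> \<in> gen_eigenspace A \<beta>) \<and>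
          v = vec (dim_row A) (\<lambda>i. \<Sum>\<beta>\<in>{\<beta>. eigenvalue A \<beta> \<and> Im \<beta> > 0}. f \<beta> $ i)}"

end

(* For c in Z^(2n+1) let t_c be the translation by the lattice vector sum_k c_k u_k, so that
   g_i = t_(e_i) and c |-> t_c is a homomorphism onto H_M. Since a is an alpha-eigenvector of M
   and R is the matrix of M on W, conjugation by g_0 sends t_c to t_(cM); for c = e_i this is the
   product formula, because e_i M is the i-th row of M. As det M = 1, c |-> cM is a bijection of
   Z^(2n+1), so g_0 normalizes H_M, and so does every (commuting) translation; hence all of G_M lies
   in the normalizer of H_M. *)

theory Submission imports Defs "HOL-Algebra.Zassenhaus" begin

lemma (in group) normalizer_memI:
  assumes "x \<in> carrier G" "H \<subseteq> carrier G" "(\<lambda>h. x \<otimes> h \<otimes> inv x) ` H = H"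
  shows "x \<in> normalizer G H"
proof -
  have "x <# H #> inv x = (\<lambda>h. x \<otimes> h \<otimes> inv x) ` H"
    by (auto simp: l_coset_def r_coset_def)
  then show ?thesis
    using assms by (simp add: normalizer_def stabilizer_def)
qed

lemma (in group) normal_in_generate_of_normalizer:
  assumes H: "subgroup H G" and A: "A \<subseteq> normalizer G H" and HA: "H \<subseteq> generate G A"
  shows "H \<lhd> G\<lparr>carrier := generate G A\<rparr>"
proof -
  let ?N = "normalizer G H"
  have N: "subgroup ?N G"
    using H by (simp add: normalizer_imp_subgroup subgroup.subset)
  interpret N: group "G\<lparr>carrier := ?N\<rparr>"
    using N by (rule subgroup.subgroup_is_group) (rule is_group)
  have "subgroup (generate G A) G"
    using A N by (auto intro: generate_is_subgroup dest: subgroup.subset)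
  then have "subgroup (generate G A) (G\<lparr>carrier := ?N\<rparr>)"
    using N generate_subgroup_incl[OF A N] by (rule subgroup_incl)
  then have "H \<lhd> (G\<lparr>carrier := ?N\<rparr>)\<lparr>carrier := generate G A\<rparr>"
    using N.normal_restrict_supergroup subgroup_in_normalizer[OF H] HA by simp
  then show ?thesis by simp
qed

locale lattice_translations =
  fixes n N :: nat and a :: "real vec" and b :: "nat \<Rightarrow> complex vec"
begin

definition S :: "(complex \<times> complex vec) set" where
  "S = {p. Im (fst p) > 0 \<and> snd p \<in> carrier_vec n}"

abbreviation G where "G \<equiv> BijGroup S"

definition shift_w :: "(nat \<Rightarrow> int) \<Rightarrow> complex" where
  "shift_w c = complex_of_real (\<Sum>k<N. of_int (c k) * a $ k)"

definition shift_z :: "(nat \<Rightarrow> int) \<Rightarrow> complex vec" where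
  "shift_z c = vec n (\<lambda>j. \<Sum>k<N. of_int (c k) * b j $ k)"

definition transl :: "(nat \<Rightarrow> int) \<Rightarrow> complex \<times> complex vec \<Rightarrow> complex \<times> complex vec" where
  "transl c = (\<lambda>(w, z) \<in> S. (w + shift_w c, z + shift_z c))"

definition unit_coeffs :: "nat \<Rightarrow> nat \<Rightarrow> int" where
  "unit_coeffs i = (\<lambda>k. if k = i then 1 else 0)"

lemma shift_z_carrier [simp]: "shift_z c \<in> carrier_vec n"
  by (simp add: shift_z_def)

lemma dim_shift_z [simp]: "dim_vec (shift_z c) = n"
  by (simp add: shift_z_def)

lemma shift_w_add: "shift_w (\<lambda>k. c k + d k) = shift_w c + shift_w d"
  by (simp add: shift_w_def distrib_right sum.distrib)

lemma shift_z_add: "shift_z (\<lambda>k. c k + d k) = shift_z c + shift_z d"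
  by (rule eq_vecI) (auto simp: shift_z_def distrib_right sum.distrib)

lemma shift_zero: "shift_w (\<lambda>_. 0) = 0" "shift_z (\<lambda>_. 0) = 0\<^sub>v n"
  by (auto simp: shift_w_def shift_z_def)

lemma shift_unit_coeffs:
  assumes "i < N"
  shows "shift_w (unit_coeffs i) = complex_of_real (a $ i)"
    and "shift_z (unit_coeffs i) = vec n (\<lambda>j. b j $ i)"
proof -
  have "real_of_int (unit_coeffs i k) * x = (if i = k then x else 0)"
    and "complex_of_int (unit_coeffs i k) * y = (if i = k then y else 0)" for k x y
    by (simp_all add: unit_coeffs_def)
  then show "shift_w (unit_coeffs i) = complex_of_real (a $ i)"
    and "shift_z (unit_coeffs i) = vec n (\<lambda>j. b j $ i)"
    using assms by (simp_all add: shift_w_def shift_z_def)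
qed

lemma transl_closed: "p \<in> S \<Longrightarrow> transl c p \<in> S"
  by (cases p) (auto simp: transl_def S_def shift_w_def)

lemma transl_transl: "p \<in> S \<Longrightarrow> transl c (transl d p) = transl (\<lambda>k. c k + d k) p"
proof -
  assume p: "p \<in> S"
  obtain w z where pwz: "p = (w, z)" and z: "z \<in> carrier_vec n"
    using p by (cases p) (auto simp: S_def)
  have "transl c (transl d p) = (w + shift_w d + shift_w c, z + shift_z d + shift_z c)"
    using p transl_closed[OF p] by (simp add: transl_def pwz)
  also have "\<dots> = (w + shift_w (\<lambda>k. c k + d k), z + shift_z (\<lambda>k. c k + d k))"
    using z by (auto simp: shift_w_add shift_z_add intro!: eq_vecI)
  also have "\<dots> = transl (\<lambda>k. c k + d k) p"
    using p by (simp add: transl_def pwz)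
  finally show ?thesis .
qed

lemma transl_zero: "p \<in> S \<Longrightarrow> transl (\<lambda>_. 0) p = p"
  by (cases p) (auto simp: transl_def S_def shift_zero)

lemma transl_cong: "(\<And>k. k < N \<Longrightarrow> c k = d k) \<Longrightarrow> transl c = transl d"
  by (simp add: transl_def shift_w_def shift_z_def)

lemma transl_carrier: "transl c \<in> carrier G"
proof -
  have "bij_betw (transl c) S S"
    by (rule bij_betw_byWitness[where f' = "transl (\<lambda>k. - c k)"])
      (auto simp: transl_transl transl_zero transl_closed)
  then show ?thesis by (simp add: BijGroup_def Bij_def transl_def)
qed

lemma transl_mult: "transl c \<otimes>\<^bsub>G\<^esub> transl d = transl (\<lambda>k. c k + d k)"
proof -
  have "compose S (transl c) (transl d) = transl (\<lambda>k. c k + d k)"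
    by (rule ext) (auto simp: compose_def transl_transl transl_def[of "\<lambda>k. c k + d k"])
  then show ?thesis using transl_carrier by (simp add: BijGroup_def)
qed

lemma one_eq_transl_zero: "\<one>\<^bsub>G\<^esub> = transl (\<lambda>_. 0)"
  by (rule ext) (auto simp: BijGroup_def transl_def[of "\<lambda>_. 0"] shift_zero S_def)

lemma inv_transl: "inv\<^bsub>G\<^esub> (transl c) = transl (\<lambda>k. - c k)"
  by (rule group.inv_equality[OF group_BijGroup])
    (auto simp: transl_mult transl_carrier one_eq_transl_zero)

lemma transl_int_pow: "transl c [^]\<^bsub>G\<^esub> (m :: int) = transl (\<lambda>k. m * c k)"
proof -
  have "transl c [^]\<^bsub>G\<^esub> (k :: nat) = transl (\<lambda>l. int k * c l)" for k
    by (induction k) (auto simp: one_eq_transl_zero transl_mult algebra_simps)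
  then show ?thesis by (auto simp: int_pow_def2 inv_transl)
qed

lemma subgroup_range_transl: "subgroup (range transl) G"
  by (rule group.subgroupI[OF group_BijGroup])
    (auto simp: transl_carrier inv_transl transl_mult)

lemma foldr_transl_unit_pow:
  "distinct ks \<Longrightarrow> foldr (\<lambda>k acc. transl (unit_coeffs k) [^]\<^bsub>G\<^esub> f k \<otimes>\<^bsub>G\<^esub> acc) ks \<one>\<^bsub>G\<^esub>
     = transl (\<lambda>l. if l \<in> set ks then f l else 0)"
proof (induction ks)
  case Nil
  then show ?case by (simp add: one_eq_transl_zero)
next
  case (Cons k ks)
  have "(\<lambda>l. f k * unit_coeffs k l + (if l \<in> set ks then f l else 0))
      = (\<lambda>l. if l \<in> set (k # ks) then f l else 0)"
    using Cons.prems by (auto simp: unit_coeffs_def)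
  then show ?case
    using Cons by (simp add: transl_int_pow transl_mult)
qed

lemma transl_eq_foldr:
  "transl f = foldr (\<lambda>k acc. transl (unit_coeffs k) [^]\<^bsub>G\<^esub> f k \<otimes>\<^bsub>G\<^esub> acc) [0..<N] \<one>\<^bsub>G\<^esub>"
  by (simp add: foldr_transl_unit_pow cong: transl_cong)

lemma generate_transl_units: "generate G ((\<lambda>k. transl (unit_coeffs k)) ` {..<N}) = range transl"
proof
  let ?E = "(\<lambda>k. transl (unit_coeffs k)) ` {..<N}"
  interpret group G by (rule group_BijGroup)
  have sub: "subgroup (generate G ?E) G"
    by (rule generate_is_subgroup) (auto simp: transl_carrier)
  show "generate G ?E \<subseteq> range transl"
    by (rule generate_subgroup_incl[OF _ subgroup_range_transl]) auto
  have "set ks \<subseteq> {..<N} \<Longrightarrow>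
    foldr (\<lambda>k acc. transl (unit_coeffs k) [^]\<^bsub>G\<^esub> f k \<otimes>\<^bsub>G\<^esub> acc) ks \<one>\<^bsub>G\<^esub> \<in> generate G ?E"
    for ks and f :: "nat \<Rightarrow> int"
  proof (induction ks)
    case (Cons k ks)
    then have "transl (unit_coeffs k) \<in> generate G ?E"
      by (auto intro: generate.incl)
    then have "transl (unit_coeffs k) [^]\<^bsub>G\<^esub> f k \<in> generate G ?E"
      by (rule subgroup_int_pow_closed[OF sub])
    then show ?case
      using Cons by (auto intro: subgroup.m_closed[OF sub])
  qed (simp add: subgroup.one_closed[OF sub])
  from this[of "[0..<N]"] show "range transl \<subseteq> generate G ?E"
    by (auto simp: atLeast0LessThan simp flip: transl_eq_foldr)
qed

definition dilation :: "real \<Rightarrow> complex mat \<Rightarrow> complex \<times> complex vec \<Rightarrow> complex \<times> complex vec" where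
  "dilation \<alpha> A = (\<lambda>(w, z) \<in> S. (complex_of_real \<alpha> * w, A *\<^sub>v z))"

lemma dilation_closed:
  "\<alpha> > 0 \<Longrightarrow> A \<in> carrier_mat n n \<Longrightarrow> p \<in> S \<Longrightarrow> dilation \<alpha> A p \<in> S"
  by (cases p) (auto simp: dilation_def S_def)

lemma dilation_dilation:
  assumes "\<beta> > 0" "A \<in> carrier_mat n n" "B \<in> carrier_mat n n" "p \<in> S"
  shows "dilation \<alpha> A (dilation \<beta> B p) = dilation (\<alpha> * \<beta>) (A * B) p"
  using assms dilation_closed[OF assms(1,3,4)]
  by (cases p) (auto simp: dilation_def S_def assoc_mult_mat_vec)

lemma dilation_one: "p \<in> S \<Longrightarrow> dilation 1 (1\<^sub>m n) p = p"
  by (cases p) (auto simp: dilation_def S_def)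

lemma dilation_carrier:
  assumes \<alpha>: "\<alpha> > 0" and A: "A \<in> carrier_mat n n" and det: "det A \<noteq> 0"
  shows "dilation \<alpha> A \<in> carrier G"
proof -
  obtain B where B: "B \<in> carrier_mat n n" "B * A = 1\<^sub>m n" "A * B = 1\<^sub>m n"
    using det_non_zero_imp_unit[OF A det] by (auto simp: Units_def ring_mat_def)
  have "bij_betw (dilation \<alpha> A) S S"
    by (rule bij_betw_byWitness[where f' = "dilation (1 / \<alpha>) B"])
      (use \<alpha> A B in \<open>auto simp: dilation_closed dilation_dilation dilation_one\<close>)
  then show ?thesis by (simp add: BijGroup_def Bij_def dilation_def)
qed

lemma dilation_transl_conj:
  assumes \<alpha>: "\<alpha> > 0" and A: "A \<in> carrier_mat n n" and det: "det A \<noteq> 0"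
    and w: "complex_of_real \<alpha> * shift_w c = shift_w d" and z: "A *\<^sub>v shift_z c = shift_z d"
  shows "dilation \<alpha> A \<otimes>\<^bsub>G\<^esub> transl c \<otimes>\<^bsub>G\<^esub> inv\<^bsub>G\<^esub> dilation \<alpha> A = transl d"
proof -
  interpret group G by (rule group_BijGroup)
  have D: "dilation \<alpha> A \<in> carrier G" using \<alpha> A det by (rule dilation_carrier)
  have "dilation \<alpha> A (transl c p) = transl d (dilation \<alpha> A p)" if p: "p \<in> S" for p
  proof -
    obtain w z where pwz: "p = (w, z)" and zc: "z \<in> carrier_vec n"
      using p by (cases p) (auto simp: S_def)
    have "dilation \<alpha> A (transl c p) = (complex_of_real \<alpha> * (w + shift_w c), A *\<^sub>v (z + shift_z c))"
      using p transl_closed[OF p] by (simp add: transl_def dilation_def pwz)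
    also have "\<dots> = (complex_of_real \<alpha> * w + shift_w d, A *\<^sub>v z + shift_z d)"
      using A zc by (simp add: distrib_left w z[symmetric] mult_add_distrib_mat_vec[of _ n n])
    also have "\<dots> = transl d (dilation \<alpha> A p)"
      using p dilation_closed[OF \<alpha> A p] by (simp add: transl_def dilation_def pwz)
    finally show ?thesis .
  qed
  then have "compose S (dilation \<alpha> A) (transl c) = compose S (transl d) (dilation \<alpha> A)"
    by (auto simp: compose_def)
  then have "dilation \<alpha> A \<otimes>\<^bsub>G\<^esub> transl c = transl d \<otimes>\<^bsub>G\<^esub> dilation \<alpha> A"
    using D transl_carrier by (simp add: BijGroup_def)
  then show ?thesis
    using D transl_carrier by (simp add: m_assoc)
qed

end

locale lattice_automorphism = lattice_translations +
  fixes M :: "int mat" and \<alpha> :: real and R :: "complex mat"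
  assumes M_carrier: "M \<in> carrier_mat N N"
    and M_det: "det M = 1"
    and alpha_pos: "\<alpha> > 0"
    and a_carrier: "a \<in> carrier_vec N"
    and a_eig: "map_mat real_of_int M *\<^sub>v a = \<alpha> \<cdot>\<^sub>v a"
    and b_carrier: "\<And>j. j < n \<Longrightarrow> b j \<in> carrier_vec N"
    and b_indep: "\<And>c. (\<forall>i<N. (\<Sum>j<n. c j * b j $ i) = 0) \<Longrightarrow> \<forall>j<n. c j = 0"
    and R_carrier: "R \<in> carrier_mat n n"
    and M_b: "\<And>j i. j < n \<Longrightarrow> i < N \<Longrightarrow>
      (map_mat complex_of_int M *\<^sub>v b j) $ i = (\<Sum>l<n. R $$ (l, j) * b l $ i)"
begin

definition row_mult :: "(nat \<Rightarrow> int) \<Rightarrow> nat \<Rightarrow> int" where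
  "row_mult c = (\<lambda>l. \<Sum>k<N. c k * M $$ (k, l))"

abbreviation g0 where "g0 \<equiv> dilation \<alpha> (transpose_mat R)"

lemma a_eig_coord: "k < N \<Longrightarrow> (\<Sum>l<N. real_of_int (M $$ (k, l)) * a $ l) = \<alpha> * a $ k"
  using arg_cong[OF a_eig, of "\<lambda>v. v $ k"] M_carrier a_carrier
  by (simp add: scalar_prod_def atLeast0LessThan)

lemma M_b_coord: "j < n \<Longrightarrow> i < N \<Longrightarrow>
  (\<Sum>k<N. complex_of_int (M $$ (i, k)) * b j $ k) = (\<Sum>l<n. R $$ (l, j) * b l $ i)"
  using M_b[of j i] M_carrier b_carrier[of j] by (simp add: scalar_prod_def atLeast0LessThan)

lemma shift_w_row_mult: "complex_of_real \<alpha> * shift_w c = shift_w (row_mult c)"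
proof -
  have "(\<Sum>l<N. real_of_int (row_mult c l) * a $ l)
      = (\<Sum>l<N. \<Sum>k<N. real_of_int (c k) * (real_of_int (M $$ (k, l)) * a $ l))"
    by (simp add: row_mult_def sum_distrib_right mult.assoc)
  also have "\<dots> = (\<Sum>k<N. real_of_int (c k) * (\<Sum>l<N. real_of_int (M $$ (k, l)) * a $ l))"
    by (subst sum.swap) (simp add: sum_distrib_left)
  also have "\<dots> = (\<Sum>k<N. real_of_int (c k) * (\<alpha> * a $ k))"
    by (intro sum.cong) (auto simp: a_eig_coord)
  also have "\<dots> = \<alpha> * (\<Sum>k<N. real_of_int (c k) * a $ k)"
    by (simp add: sum_distrib_left algebra_simps)
  finally show ?thesis by (simp add: shift_w_def)
qed

lemma shift_z_row_mult: "transpose_mat R *\<^sub>v shift_z c = shift_z (row_mult c)"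
proof (rule eq_vecI)
  fix j assume "j < dim_vec (shift_z (row_mult c))"
  then have j: "j < n" by simp
  have "(transpose_mat R *\<^sub>v shift_z c) $ j
      = (\<Sum>i<n. R $$ (i, j) * (\<Sum>k<N. of_int (c k) * b i $ k))"
    using j R_carrier by (simp add: scalar_prod_def atLeast0LessThan shift_z_def)
  also have "\<dots> = (\<Sum>k<N. of_int (c k) * (\<Sum>i<n. R $$ (i, j) * b i $ k))"
    by (simp add: sum_distrib_left algebra_simps) (rule sum.swap)
  also have "\<dots> = (\<Sum>k<N. of_int (c k) * (\<Sum>l<N. complex_of_int (M $$ (k, l)) * b j $ l))"
    by (simp add: M_b_coord j)
  also have "\<dots> = shift_z (row_mult c) $ j"
    using j by (simp add: shift_z_def row_mult_def sum_distrib_left sum_distrib_right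
        algebra_simps) (rule sum.swap)
  finally show "(transpose_mat R *\<^sub>v shift_z c) $ j = shift_z (row_mult c) $ j" .
qed (use R_carrier in simp)

definition b_comb :: "complex vec \<Rightarrow> complex vec" where
  "b_comb v = vec N (\<lambda>i. \<Sum>j<n. v $ j * b j $ i)"

lemma M_b_comb:
  assumes v: "v \<in> carrier_vec n"
  shows "map_mat complex_of_int M *\<^sub>v b_comb v = b_comb (R *\<^sub>v v)"
proof (rule eq_vecI)
  fix i assume "i < dim_vec (b_comb (R *\<^sub>v v))"
  then have i: "i < N" by (simp add: b_comb_def)
  have "(map_mat complex_of_int M *\<^sub>v b_comb v) $ i
      = (\<Sum>k<N. of_int (M $$ (i, k)) * (\<Sum>j<n. v $ j * b j $ k))"
    using i M_carrier by (simp add: b_comb_def scalar_prod_def atLeast0LessThan)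
  also have "\<dots> = (\<Sum>j<n. v $ j * (\<Sum>k<N. of_int (M $$ (i, k)) * b j $ k))"
    by (simp add: sum_distrib_left algebra_simps) (rule sum.swap)
  also have "\<dots> = (\<Sum>j<n. v $ j * (\<Sum>l<n. R $$ (l, j) * b l $ i))"
    by (simp add: M_b_coord i)
  also have "\<dots> = (\<Sum>l<n. (\<Sum>j<n. R $$ (l, j) * v $ j) * b l $ i)"
    by (simp add: sum_distrib_left sum_distrib_right algebra_simps) (rule sum.swap)
  also have "\<dots> = b_comb (R *\<^sub>v v) $ i"
    using i v R_carrier by (simp add: b_comb_def scalar_prod_def atLeast0LessThan)
  finally show "(map_mat complex_of_int M *\<^sub>v b_comb v) $ i = b_comb (R *\<^sub>v v) $ i" .
qed (use M_carrier in \<open>simp add: b_comb_def\<close>)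

lemma det_R_nonzero: "det R \<noteq> 0"
proof
  assume "det R = 0"
  then obtain v where v: "v \<in> carrier_vec n" "v \<noteq> 0\<^sub>v n" "R *\<^sub>v v = 0\<^sub>v n"
    using det_0_iff_vec_prod_zero_field[OF R_carrier] by auto
  have "map_mat complex_of_int M *\<^sub>v b_comb v = 0\<^sub>v N"
    using M_b_comb[OF v(1)] v(3) by (simp add: b_comb_def zero_vec_def)
  moreover have "det (map_mat complex_of_int M) \<noteq> 0"
    using M_det by (simp add: of_int_hom.hom_det)
  moreover have "b_comb v \<in> carrier_vec N"
    by (simp add: b_comb_def)
  ultimately have bv: "b_comb v = 0\<^sub>v N"
    using det_0_iff_vec_prod_zero_field[of "map_mat complex_of_int M" N] M_carrier
    by (simp only: map_carrier_mat) blast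
  then have "\<forall>j<n. v $ j = 0"
  proof (intro b_indep allI impI)
    fix i assume "i < N"
    then show "(\<Sum>j<n. v $ j * b j $ i) = 0"
      using arg_cong[OF bv, of "\<lambda>x. x $ i"] by (simp add: b_comb_def)
  qed
  then show False using v(1,2) by (auto intro!: eq_vecI)
qed

lemma g0_carrier: "g0 \<in> carrier G"
  using alpha_pos R_carrier det_R_nonzero
  by (intro dilation_carrier) (auto simp: det_transpose)

lemma g0_transl_conj: "g0 \<otimes>\<^bsub>G\<^esub> transl c \<otimes>\<^bsub>G\<^esub> inv\<^bsub>G\<^esub> g0 = transl (row_mult c)"
  using alpha_pos R_carrier det_R_nonzero
  by (intro dilation_transl_conj) (auto simp: det_transpose shift_w_row_mult shift_z_row_mult)

lemma row_mult_surj: "\<exists>d. \<forall>l<N. row_mult d l = c l"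
proof -
  define A where "A = adj_mat M"
  have A: "A \<in> carrier_mat N N" "A * M = 1\<^sub>m N"
    using adj_mat[OF M_carrier] M_det by (auto simp: A_def)
  have "row_mult (\<lambda>k. \<Sum>j<N. c j * A $$ (j, k)) l = c l" if l: "l < N" for l
  proof -
    have "row_mult (\<lambda>k. \<Sum>j<N. c j * A $$ (j, k)) l
        = (\<Sum>j<N. c j * (\<Sum>k<N. A $$ (j, k) * M $$ (k, l)))"
      by (simp add: row_mult_def sum_distrib_left sum_distrib_right algebra_simps) (rule sum.swap)
    also have "\<dots> = (\<Sum>j<N. c j * (A * M) $$ (j, l))"
      using l A(1) M_carrier by (simp add: scalar_prod_def atLeast0LessThan)
    also have "\<dots> = c l"
      using l by (simp add: A(2) if_distrib cong: if_cong)
    finally show ?thesis .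
  qed
  then show ?thesis by blast
qed

lemma row_mult_unit_coeffs:
  assumes "i < N" shows "row_mult (unit_coeffs i) = (\<lambda>l. M $$ (i, l))"
proof -
  have "unit_coeffs i k * M $$ (k, l) = (if i = k then M $$ (i, l) else 0)" for k l
    by (simp add: unit_coeffs_def)
  then show ?thesis using assms by (simp add: row_mult_def)
qed

lemma g0_normalizes_transl: "g0 \<in> normalizer G (range transl)"
proof (rule group.normalizer_memI[OF group_BijGroup g0_carrier])
  show "range transl \<subseteq> carrier G" using transl_carrier by auto
  have "transl c \<in> range (\<lambda>c. transl (row_mult c))" for c
  proof -
    obtain d where "\<forall>l<N. row_mult d l = c l" using row_mult_surj by blast
    then have "transl (row_mult d) = transl c" by (simp cong: transl_cong)
    then show ?thesis by (metis rangeI)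
  qed
  then have "range (\<lambda>c. transl (row_mult c)) = range transl" by auto
  then show "(\<lambda>h. g0 \<otimes>\<^bsub>G\<^esub> h \<otimes>\<^bsub>G\<^esub> inv\<^bsub>G\<^esub> g0) ` range transl = range transl"
    by (simp add: image_image g0_transl_conj)
qed

lemma transl_normalizes_transl: "transl c \<in> normalizer G (range transl)"
proof (rule group.normalizer_memI[OF group_BijGroup transl_carrier])
  show "range transl \<subseteq> carrier G" using transl_carrier by auto
  have "transl c \<otimes>\<^bsub>G\<^esub> transl d \<otimes>\<^bsub>G\<^esub> inv\<^bsub>G\<^esub> transl c = transl d" for d
    by (simp add: inv_transl transl_mult)
  then show "(\<lambda>h. transl c \<otimes>\<^bsub>G\<^esub> h \<otimes>\<^bsub>G\<^esub> inv\<^bsub>G\<^esub> transl c) ` range transl = range transl"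
    by (simp add: image_image)
qed

lemma range_transl_normal:
  "range transl \<lhd> G\<lparr>carrier := generate G (insert g0 ((\<lambda>k. transl (unit_coeffs k)) ` {..<N}))\<rparr>"
proof (rule group.normal_in_generate_of_normalizer[OF group_BijGroup subgroup_range_transl])
  show "insert g0 ((\<lambda>k. transl (unit_coeffs k)) ` {..<N}) \<subseteq> normalizer G (range transl)"
    using g0_normalizes_transl transl_normalizes_transl by auto
  show "range transl \<subseteq> generate G (insert g0 ((\<lambda>k. transl (unit_coeffs k)) ` {..<N}))"
    using group.mono_generate[OF group_BijGroup, of _ "insert g0 _"]
    by (auto simp flip: generate_transl_units)
qed

end

theorem lemma2p3:
  fixes n :: nat and M :: "int mat" and \<alpha> :: real and a :: "real vec"
    and b :: "nat \<Rightarrow> complex vec" and R :: "complex mat"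
  defines "N \<equiv> 2 * n + 1"
  defines "Mc \<equiv> map_mat complex_of_int M"
  defines "S \<equiv> {p :: complex \<times> complex vec. Im (fst p) > 0 \<and> snd p \<in> carrier_vec n}"
  defines "g0 \<equiv> (\<lambda>(w, z) \<in> S. (complex_of_real \<alpha> * w, transpose_mat R *\<^sub>v z))"
  defines "u \<equiv> (\<lambda>i. (complex_of_real (a $ i), vec n (\<lambda>j. b j $ i)))"
  defines "g \<equiv> (\<lambda>i. (\<lambda>(w, z) \<in> S. (w + fst (u i), z + snd (u i))))"
  defines "G \<equiv> BijGroup S"
  assumes n_pos: "n \<ge> 1"
    and M_carrier: "M \<in> carrier_mat N N"
    and M_det: "det M = 1"
    and alpha_eig: "eigenvalue Mc (complex_of_real \<alpha>)"
    and only_real_eig: "\<And>\<mu>. eigenvalue Mc \<mu> \<Longrightarrow> Im \<mu> = 0 \<Longrightarrow> \<mu> = complex_of_real \<alpha>"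
    and alpha_pos: "\<alpha> > 0" and alpha_ne1: "\<alpha> \<noteq> 1"
    and alpha_simple: "Polynomial.order (complex_of_real \<alpha>) (char_poly Mc) = 1"
    and a_carrier: "a \<in> carrier_vec N" and a_nz: "a \<noteq> 0\<^sub>v N"
    and a_eig: "map_mat real_of_int M *\<^sub>v a = \<alpha> \<cdot>\<^sub>v a"
    and b_in_W: "\<And>j. j < n \<Longrightarrow> b j \<in> upper_gen_eigensum Mc"
    and b_indep: "\<And>c. (\<forall>i<N. (\<Sum>j<n. c j * b j $ i) = 0) \<Longrightarrow> \<forall>j<n. c j = 0"
    and b_span: "\<And>v. v \<in> upper_gen_eigensum Mc \<Longrightarrow>
                    \<exists>c. v = vec N (\<lambda>i. \<Sum>j<n. c j * b j $ i)"
    and R_carrier: "R \<in> carrier_mat n n"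
    and R_def: "\<And>j i. j < n \<Longrightarrow> i < N \<Longrightarrow> (Mc *\<^sub>v b j) $ i = (\<Sum>l<n. R $$ (l, j) * b l $ i)"
  shows "(\<forall>i<N. g0 \<otimes>\<^bsub>G\<^esub> g i \<otimes>\<^bsub>G\<^esub> inv\<^bsub>G\<^esub> g0 =
            foldr (\<lambda>k acc. (g k [^]\<^bsub>G\<^esub> (M $$ (i, k))) \<otimes>\<^bsub>G\<^esub> acc) [0..<N] \<one>\<^bsub>G\<^esub>)
         \<and> generate G (g ` {..<N}) \<lhd> G\<lparr>carrier := generate G (insert g0 (g ` {..<N}))\<rparr>"
proof -
  have b_carrier: "b j \<in> carrier_vec N" if "j < n" for j
    using b_in_W[OF that] M_carrier by (auto simp: upper_gen_eigensum_def Mc_def)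
  interpret L: lattice_automorphism n N a b M \<alpha> R
    using M_carrier M_det alpha_pos a_carrier a_eig b_carrier b_indep R_carrier R_def
    by unfold_locales (auto simp: Mc_def)
  have G: "G = BijGroup L.S" and g0: "g0 = L.g0"
    by (simp_all add: G_def S_def L.S_def g0_def L.dilation_def)
  have g: "g i = L.transl (L.unit_coeffs i)" if "i < N" for i
    using that by (simp add: g_def u_def L.transl_def S_def L.S_def L.shift_unit_coeffs)
  have "g0 \<otimes>\<^bsub>G\<^esub> g i \<otimes>\<^bsub>G\<^esub> inv\<^bsub>G\<^esub> g0 =
      foldr (\<lambda>k acc. (g k [^]\<^bsub>G\<^esub> (M $$ (i, k))) \<otimes>\<^bsub>G\<^esub> acc) [0..<N] \<one>\<^bsub>G\<^esub>" if i: "i < N" for i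
  proof -
    have "g0 \<otimes>\<^bsub>G\<^esub> g i \<otimes>\<^bsub>G\<^esub> inv\<^bsub>G\<^esub> g0 = L.transl (\<lambda>k. M $$ (i, k))"
      using i by (simp add: G g0 g L.g0_transl_conj L.row_mult_unit_coeffs)
    also have "\<dots> = foldr (\<lambda>k acc. (g k [^]\<^bsub>G\<^esub> (M $$ (i, k))) \<otimes>\<^bsub>G\<^esub> acc) [0..<N] \<one>\<^bsub>G\<^esub>"
      unfolding G by (subst L.transl_eq_foldr) (auto simp: g intro!: foldr_cong)
    finally show ?thesis .
  qed
  moreover have "generate G (g ` {..<N}) \<lhd> G\<lparr>carrier := generate G (insert g0 (g ` {..<N}))\<rparr>"
  proof -
    have "g ` {..<N} = (\<lambda>k. L.transl (L.unit_coeffs k)) ` {..<N}"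
      by (simp add: g)
    then show ?thesis
      using L.range_transl_normal by (simp only: G g0 L.generate_transl_units)
  qed
  ultimately show ?thesis by blast
qed

end
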